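(* Let $\phi:(\mathcal C,S)\to(\mathcal D,T)$ be an admissible morphism from a finite quasi-schemoid $(\mathcal C,S)$ whose underlying category is a groupoid to a basic quasi-schemoid $(\mathcal D,T)$. Then for each $\sigma\in S$ there is a positive integer $n^\phi_\sigma$ such that for every $x\in ob(\mathcal C)$ and every $g\in\phi(\sigma)$ with $t(g)=\phi(x)$, $$\#\big(\phi^{-1}(g)\cap x\sigma\big)=n^\phi_\sigma,$$ where $x\sigma=\{f\in\sigma: t(f)=x\}$.
   Context: Write $s(f),t(f)$ for source and target. A quasi-schemoid is a pair $(\mathcal C,S)$ with $\mathcal C$ a small category and $S$ a partition of $mor(\mathcal C)$ into nonempty blocks such that for all $\sigma,\tau,\mu\in S$ and $f,g\in\mu$ the sets $\{(a,b)\in\sigma\times\tau: s(a)=t(b), a\circ b=f\}$ and the analogous set for $g$ have equal cardinality, denoted $p^\mu_{\sigma\tau}$. It is finite if $mor(\mathcal C)$ is finite; unital if every block meeting $\{1_x:x\in ob(\mathcal C)\}$ is contained in it; basic if it is unital and $\mathcal C$ is a groupoid. A morphism of quasi-schemoids $\phi$ is a functor such that each $\phi(\sigma)$ lies in a (unique) block of the target; by abuse, $\phi(\sigma)$ denotes that block. $\phi$ is admissible if for every $x\in ob(\mathcal C)$, $\sigma\in S$ and $g\in\phi(\sigma)$ with $t(g)=\phi(x)$ there exists $f\in\sigma$ with $t(f)=x$ and $\phi(f)=g$. *)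

theory Defs
  imports Main "HOL-Library.Equipollence"
begin

text \<open>A small category: objects, morphisms, source, target, composition
  (Cmp a b = a \<circ> b, defined when Src a = Tgt b) and identities.\<close>
record ('o,'m) cat =
  Ob  :: "'o set"
  Mor :: "'m set"
  Src :: "'m \<Rightarrow> 'o"
  Tgt :: "'m \<Rightarrow> 'o"
  Cmp :: "'m \<Rightarrow> 'm \<Rightarrow> 'm"
  Idm :: "'o \<Rightarrow> 'm"

definition category :: "('o,'m) cat \<Rightarrow> bool" where
  "category C \<longleftrightarrow>
     (\<forall>f\<in>Mor C. Src C f \<in> Ob C \<and> Tgt C f \<in> Ob C) \<and>
     (\<forall>x\<in>Ob C. Idm C x \<in> Mor C \<and> Src C (Idm C x) = x \<and> Tgt C (Idm C x) = x) \<and>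
     (\<forall>a\<in>Mor C. \<forall>b\<in>Mor C. Src C a = Tgt C b \<longrightarrow>
        Cmp C a b \<in> Mor C \<and> Src C (Cmp C a b) = Src C b \<and> Tgt C (Cmp C a b) = Tgt C a) \<and>
     (\<forall>a\<in>Mor C. \<forall>b\<in>Mor C. \<forall>c\<in>Mor C. Src C a = Tgt C b \<longrightarrow> Src C b = Tgt C c \<longrightarrow>
        Cmp C (Cmp C a b) c = Cmp C a (Cmp C b c)) \<and>
     (\<forall>f\<in>Mor C. Cmp C (Idm C (Tgt C f)) f = f \<and> Cmp C f (Idm C (Src C f)) = f)"

definition groupoid :: "('o,'m) cat \<Rightarrow> bool" where
  "groupoid C \<longleftrightarrow> category C \<and>
     (\<forall>f\<in>Mor C. \<exists>g\<in>Mor C. Src C g = Tgt C f \<and> Tgt C g = Src C f \<and>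
        Cmp C g f = Idm C (Src C f) \<and> Cmp C f g = Idm C (Tgt C f))"

definition factor_pairs :: "('o,'m) cat \<Rightarrow> 'm set \<Rightarrow> 'm set \<Rightarrow> 'm \<Rightarrow> ('m \<times> 'm) set" where
  "factor_pairs C \<sigma> \<tau> f = {(a,b). a \<in> \<sigma> \<and> b \<in> \<tau> \<and> Src C a = Tgt C b \<and> Cmp C a b = f}"

definition is_partition :: "'m set set \<Rightarrow> 'm set \<Rightarrow> bool" where
  "is_partition S M \<longleftrightarrow> \<Union>S = M \<and> {} \<notin> S \<and>
     (\<forall>\<sigma>\<in>S. \<forall>\<tau>\<in>S. \<sigma> \<noteq> \<tau> \<longrightarrow> \<sigma> \<inter> \<tau> = {})"

text \<open>Equal cardinality is expressed by equipollence (the sets may be infinite).\<close>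
definition quasi_schemoid :: "('o,'m) cat \<Rightarrow> 'm set set \<Rightarrow> bool" where
  "quasi_schemoid C S \<longleftrightarrow> category C \<and> is_partition S (Mor C) \<and>
     (\<forall>\<sigma>\<in>S. \<forall>\<tau>\<in>S. \<forall>\<mu>\<in>S. \<forall>f\<in>\<mu>. \<forall>g\<in>\<mu>.
        factor_pairs C \<sigma> \<tau> f \<approx> factor_pairs C \<sigma> \<tau> g)"

definition identities :: "('o,'m) cat \<Rightarrow> 'm set" where
  "identities C = Idm C ` Ob C"

definition unital_qs :: "('o,'m) cat \<Rightarrow> 'm set set \<Rightarrow> bool" where
  "unital_qs C S \<longleftrightarrow> quasi_schemoid C S \<and>
     (\<forall>\<sigma>\<in>S. \<sigma> \<inter> identities C \<noteq> {} \<longrightarrow> \<sigma> \<subseteq> identities C)"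

definition basic_qs :: "('o,'m) cat \<Rightarrow> 'm set set \<Rightarrow> bool" where
  "basic_qs C S \<longleftrightarrow> unital_qs C S \<and> groupoid C"

definition is_functor :: "('o,'m) cat \<Rightarrow> ('p,'n) cat \<Rightarrow> ('o \<Rightarrow> 'p) \<Rightarrow> ('m \<Rightarrow> 'n) \<Rightarrow> bool" where
  "is_functor C D Fo Fm \<longleftrightarrow>
     (\<forall>x\<in>Ob C. Fo x \<in> Ob D) \<and>
     (\<forall>f\<in>Mor C. Fm f \<in> Mor D \<and> Src D (Fm f) = Fo (Src C f) \<and> Tgt D (Fm f) = Fo (Tgt C f)) \<and>
     (\<forall>a\<in>Mor C. \<forall>b\<in>Mor C. Src C a = Tgt C b \<longrightarrow> Fm (Cmp C a b) = Cmp D (Fm a) (Fm b)) \<and>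
     (\<forall>x\<in>Ob C. Fm (Idm C x) = Idm D (Fo x))"

definition qs_morphism ::
  "('o,'m) cat \<Rightarrow> 'm set set \<Rightarrow> ('p,'n) cat \<Rightarrow> 'n set set \<Rightarrow> ('o \<Rightarrow> 'p) \<Rightarrow> ('m \<Rightarrow> 'n) \<Rightarrow> bool" where
  "qs_morphism C S D T Fo Fm \<longleftrightarrow> quasi_schemoid C S \<and> quasi_schemoid D T \<and>
     is_functor C D Fo Fm \<and> (\<forall>\<sigma>\<in>S. \<exists>\<tau>\<in>T. Fm ` \<sigma> \<subseteq> \<tau>)"

definition img_block :: "'n set set \<Rightarrow> ('m \<Rightarrow> 'n) \<Rightarrow> 'm set \<Rightarrow> 'n set" where
  "img_block T Fm \<sigma> = (THE \<tau>. \<tau> \<in> T \<and> Fm ` \<sigma> \<subseteq> \<tau>)"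

definition admissible ::
  "('o,'m) cat \<Rightarrow> 'm set set \<Rightarrow> ('p,'n) cat \<Rightarrow> 'n set set \<Rightarrow> ('o \<Rightarrow> 'p) \<Rightarrow> ('m \<Rightarrow> 'n) \<Rightarrow> bool" where
  "admissible C S D T Fo Fm \<longleftrightarrow> qs_morphism C S D T Fo Fm \<and>
     (\<forall>x\<in>Ob C. \<forall>\<sigma>\<in>S. \<forall>g\<in>img_block T Fm \<sigma>. Tgt D g = Fo x \<longrightarrow>
        (\<exists>f\<in>\<sigma>. Tgt C f = x \<and> Fm f = g))"

end

theory Submission
  imports Defs
begin

text \<open>For \<open>f \<in> \<sigma>\<close>, sending a factorisation \<open>f = a \<circ> b\<close> with \<open>a \<in> \<sigma>\<close> and \<open>\<phi>(b)\<close> an identity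
  to \<open>a\<close> is a bijection onto the fibre \<open>\<phi>\<inverse>(\<phi> f) \<inter> t(f)\<sigma>\<close>: cancellation in the groupoid \<open>\<C>\<close>
  gives injectivity, and \<open>b = a\<inverse> \<circ> f\<close> gives surjectivity, since \<open>\<phi>(a) \<circ> \<phi>(b) = \<phi>(a)\<close> forces
  \<open>\<phi>(b)\<close> to be an identity in the groupoid \<open>\<D>\<close>. By unitality of \<open>T\<close> the morphisms sent to identities
  form a union of blocks of \<open>S\<close>, so the number of such factorisations is a sum of structure
  constants \<open>p\<^sup>\<mu>\<^sub>\<sigma>\<^sub>\<tau>\<close> and does not depend on \<open>f \<in> \<sigma>\<close>. Admissibility makes every fibre in question
  one of these, and it is nonempty.\<close>

lemma category_Src_Tgt_in_Ob:
  "category C \<Longrightarrow> f \<in> Mor C \<Longrightarrow> Src C f \<in> Ob C \<and> Tgt C f \<in> Ob C"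
  by (simp add: category_def)

lemma category_Idm:
  "category C \<Longrightarrow> x \<in> Ob C \<Longrightarrow> Idm C x \<in> Mor C \<and> Src C (Idm C x) = x \<and> Tgt C (Idm C x) = x"
  by (simp add: category_def)

lemma category_Cmp:
  "category C \<Longrightarrow> a \<in> Mor C \<Longrightarrow> b \<in> Mor C \<Longrightarrow> Src C a = Tgt C b \<Longrightarrow>
     Cmp C a b \<in> Mor C \<and> Src C (Cmp C a b) = Src C b \<and> Tgt C (Cmp C a b) = Tgt C a"
  by (simp add: category_def)

lemma category_Cmp_assoc:
  "category C \<Longrightarrow> a \<in> Mor C \<Longrightarrow> b \<in> Mor C \<Longrightarrow> c \<in> Mor C \<Longrightarrow> Src C a = Tgt C b \<Longrightarrow>
     Src C b = Tgt C c \<Longrightarrow> Cmp C (Cmp C a b) c = Cmp C a (Cmp C b c)"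
  by (simp add: category_def)

lemma category_Idm_left: "category C \<Longrightarrow> f \<in> Mor C \<Longrightarrow> Cmp C (Idm C (Tgt C f)) f = f"
  by (simp add: category_def)

lemma category_Idm_right: "category C \<Longrightarrow> f \<in> Mor C \<Longrightarrow> Cmp C f (Idm C (Src C f)) = f"
  by (simp add: category_def)

lemma groupoid_category: "groupoid C \<Longrightarrow> category C"
  unfolding groupoid_def by blast

lemma groupoid_inverse:
  assumes "groupoid C" "f \<in> Mor C"
  obtains g where "g \<in> Mor C" "Src C g = Tgt C f" "Tgt C g = Src C f"
    "Cmp C g f = Idm C (Src C f)" "Cmp C f g = Idm C (Tgt C f)"
  using assms unfolding groupoid_def by blast

lemma groupoid_cancel_left:
  assumes G: "groupoid C" and a: "a \<in> Mor C" and b: "b \<in> Mor C" and b': "b' \<in> Mor C"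
    and ab: "Src C a = Tgt C b" and ab': "Src C a = Tgt C b'"
    and eq: "Cmp C a b = Cmp C a b'"
  shows "b = b'"
proof -
  have cat: "category C" using G by (rule groupoid_category)
  obtain i where i: "i \<in> Mor C" "Src C i = Tgt C a" "Tgt C i = Src C a"
    "Cmp C i a = Idm C (Src C a)" "Cmp C a i = Idm C (Tgt C a)"
    by (rule groupoid_inverse[OF G a])
  have "b = Cmp C (Cmp C i a) b"
    using i(4) ab category_Idm_left[OF cat b] by simp
  also have "\<dots> = Cmp C (Cmp C i a) b'"
    using category_Cmp_assoc[OF cat i(1) a b i(2) ab] category_Cmp_assoc[OF cat i(1) a b' i(2) ab'] eq
    by simp
  also have "\<dots> = b'"
    using i(4) ab' category_Idm_left[OF cat b'] by simp
  finally show ?thesis .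
qed

lemma groupoid_right_unit_unique:
  assumes G: "groupoid C" and a: "a \<in> Mor C" and b: "b \<in> Mor C"
    and ab: "Src C a = Tgt C b" and eq: "Cmp C a b = a"
  shows "b = Idm C (Src C a)"
proof (rule groupoid_cancel_left[OF G a b])
  have cat: "category C" using G by (rule groupoid_category)
  have "Src C a \<in> Ob C" using category_Src_Tgt_in_Ob[OF cat a] by blast
  then show "Idm C (Src C a) \<in> Mor C" "Src C a = Tgt C (Idm C (Src C a))"
    using category_Idm[OF cat] by simp_all
  show "Src C a = Tgt C b" by (rule ab)
  show "Cmp C a b = Cmp C a (Idm C (Src C a))"
    using eq category_Idm_right[OF cat a] by simp
qed

lemma groupoid_factor_through:
  assumes G: "groupoid C" and a: "a \<in> Mor C" and f: "f \<in> Mor C" and t: "Tgt C a = Tgt C f"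
  obtains b where "b \<in> Mor C" "Tgt C b = Src C a" "Cmp C a b = f"
proof -
  have cat: "category C" using G by (rule groupoid_category)
  obtain i where i: "i \<in> Mor C" "Src C i = Tgt C a" "Tgt C i = Src C a"
    "Cmp C i a = Idm C (Src C a)" "Cmp C a i = Idm C (Tgt C a)"
    by (rule groupoid_inverse[OF G a])
  have "Cmp C a (Cmp C i f) = Cmp C (Cmp C a i) f"
    using category_Cmp_assoc[OF cat a i(1) f] i t by simp
  also have "\<dots> = f" using i(5) t category_Idm_left[OF cat f] by simp
  finally have "Cmp C a (Cmp C i f) = f" .
  moreover have "Cmp C i f \<in> Mor C" "Tgt C (Cmp C i f) = Src C a"
    using category_Cmp[OF cat i(1) f] i t by simp_all
  ultimately show thesis using that by blast
qed

lemma functor_Mor: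
  "is_functor C D Fo Fm \<Longrightarrow> f \<in> Mor C \<Longrightarrow>
     Fm f \<in> Mor D \<and> Src D (Fm f) = Fo (Src C f) \<and> Tgt D (Fm f) = Fo (Tgt C f)"
  by (simp add: is_functor_def)

lemma functor_Cmp:
  "is_functor C D Fo Fm \<Longrightarrow> a \<in> Mor C \<Longrightarrow> b \<in> Mor C \<Longrightarrow> Src C a = Tgt C b \<Longrightarrow>
     Fm (Cmp C a b) = Cmp D (Fm a) (Fm b)"
  by (simp add: is_functor_def)

lemma partition_block_subset: "is_partition S M \<Longrightarrow> \<sigma> \<in> S \<Longrightarrow> \<sigma> \<subseteq> M"
  unfolding is_partition_def by blast

lemma partition_block_nonempty: "is_partition S M \<Longrightarrow> \<sigma> \<in> S \<Longrightarrow> \<sigma> \<noteq> {}"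
  unfolding is_partition_def by blast

lemma partition_covers: "is_partition S M \<Longrightarrow> f \<in> M \<Longrightarrow> \<exists>\<sigma>\<in>S. f \<in> \<sigma>"
  unfolding is_partition_def by blast

lemma partition_disjoint: "is_partition S M \<Longrightarrow> \<sigma> \<in> S \<Longrightarrow> \<tau> \<in> S \<Longrightarrow> \<sigma> \<noteq> \<tau> \<Longrightarrow> \<sigma> \<inter> \<tau> = {}"
  unfolding is_partition_def by blast

lemma finite_factor_pairs:
  assumes "finite (Mor C)" "\<sigma> \<subseteq> Mor C" "\<tau> \<subseteq> Mor C"
  shows "finite (factor_pairs C \<sigma> \<tau> f)"
proof (rule finite_subset)
  show "factor_pairs C \<sigma> \<tau> f \<subseteq> Mor C \<times> Mor C"
    using assms(2,3) unfolding factor_pairs_def by auto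
qed (use assms(1) in simp)

lemma quasi_schemoid_partition: "quasi_schemoid C S \<Longrightarrow> is_partition S (Mor C)"
  by (simp add: quasi_schemoid_def)

lemma quasi_schemoid_factor_pairs_eqpoll:
  "quasi_schemoid C S \<Longrightarrow> \<sigma> \<in> S \<Longrightarrow> \<tau> \<in> S \<Longrightarrow> \<mu> \<in> S \<Longrightarrow> f \<in> \<mu> \<Longrightarrow> g \<in> \<mu> \<Longrightarrow>
     factor_pairs C \<sigma> \<tau> f \<approx> factor_pairs C \<sigma> \<tau> g"
  by (simp add: quasi_schemoid_def)

lemma card_factor_pairs_Union:
  assumes qs: "quasi_schemoid C S" and fin: "finite (Mor C)"
    and \<sigma>: "\<sigma> \<in> S" and B: "B \<subseteq> S"
  shows "card (factor_pairs C \<sigma> (\<Union>B) f) = (\<Sum>\<tau>\<in>B. card (factor_pairs C \<sigma> \<tau> f))"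
proof -
  have part: "is_partition S (Mor C)" using qs by (rule quasi_schemoid_partition)
  have blocks: "\<tau> \<subseteq> Mor C" if "\<tau> \<in> B" for \<tau>
    using partition_block_subset[OF part] B that by blast
  have "B \<subseteq> Pow (Mor C)" using blocks by blast
  then have "finite B" using fin by (simp add: finite_subset)
  moreover have "factor_pairs C \<sigma> (\<Union>B) f = (\<Union>\<tau>\<in>B. factor_pairs C \<sigma> \<tau> f)"
    unfolding factor_pairs_def by auto
  moreover have "\<forall>\<tau>\<in>B. finite (factor_pairs C \<sigma> \<tau> f)"
    using finite_factor_pairs[OF fin partition_block_subset[OF part \<sigma>] blocks] by blast
  moreover have "\<forall>\<tau>\<in>B. \<forall>\<tau>'\<in>B. \<tau> \<noteq> \<tau>' \<longrightarrow> factor_pairs C \<sigma> \<tau> f \<inter> factor_pairs C \<sigma> \<tau>' f = {}"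
    using partition_disjoint[OF part] B unfolding factor_pairs_def by blast
  ultimately show ?thesis by (simp add: card_UN_disjoint)
qed

lemma card_factor_pairs_Union_const:
  assumes qs: "quasi_schemoid C S" and fin: "finite (Mor C)"
    and \<sigma>: "\<sigma> \<in> S" and \<mu>: "\<mu> \<in> S" and B: "B \<subseteq> S" and f: "f \<in> \<mu>" and g: "g \<in> \<mu>"
  shows "card (factor_pairs C \<sigma> (\<Union>B) f) = card (factor_pairs C \<sigma> (\<Union>B) g)"
proof -
  have part: "is_partition S (Mor C)" using qs by (rule quasi_schemoid_partition)
  have "card (factor_pairs C \<sigma> \<tau> f) = card (factor_pairs C \<sigma> \<tau> g)" if \<tau>: "\<tau> \<in> B" for \<tau>
  proof -
    have \<tau>S: "\<tau> \<in> S" using \<tau> B by blast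
    have fins: "finite (factor_pairs C \<sigma> \<tau> h)" for h
      using finite_factor_pairs[OF fin] partition_block_subset[OF part] \<sigma> \<tau>S by blast
    show ?thesis
      using quasi_schemoid_factor_pairs_eqpoll[OF qs \<sigma> \<tau>S \<mu> f g] eqpoll_iff_card fins by blast
  qed
  then show ?thesis
    using card_factor_pairs_Union[OF qs fin \<sigma> B] by (simp cong: sum.cong)
qed

lemma qs_morphism_functor: "qs_morphism C S D T Fo Fm \<Longrightarrow> is_functor C D Fo Fm"
  by (simp add: qs_morphism_def)

lemma qs_morphism_source: "qs_morphism C S D T Fo Fm \<Longrightarrow> quasi_schemoid C S"
  by (simp add: qs_morphism_def)

lemma qs_morphism_block: "qs_morphism C S D T Fo Fm \<Longrightarrow> \<sigma> \<in> S \<Longrightarrow> \<exists>\<tau>\<in>T. Fm ` \<sigma> \<subseteq> \<tau>"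
  by (simp add: qs_morphism_def)

lemma admissible_qs_morphism: "admissible C S D T Fo Fm \<Longrightarrow> qs_morphism C S D T Fo Fm"
  by (simp add: admissible_def)

lemma admissibleD:
  "admissible C S D T Fo Fm \<Longrightarrow> x \<in> Ob C \<Longrightarrow> \<sigma> \<in> S \<Longrightarrow> g \<in> img_block T Fm \<sigma> \<Longrightarrow>
     Tgt D g = Fo x \<Longrightarrow> \<exists>f\<in>\<sigma>. Tgt C f = x \<and> Fm f = g"
  by (simp add: admissible_def)

lemma unital_qs_block_identities:
  "unital_qs D T \<Longrightarrow> \<tau> \<in> T \<Longrightarrow> \<tau> \<inter> identities D \<noteq> {} \<Longrightarrow> \<tau> \<subseteq> identities D"
  by (simp add: unital_qs_def)

definition identity_preimage :: "('o,'m) cat \<Rightarrow> ('p,'n) cat \<Rightarrow> ('m \<Rightarrow> 'n) \<Rightarrow> 'm set" where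
  "identity_preimage C D Fm = {b \<in> Mor C. Fm b \<in> identities D}"

lemma identity_preimage_eq_Union_blocks:
  assumes mor: "qs_morphism C S D T Fo Fm" and unital: "unital_qs D T"
  shows "identity_preimage C D Fm = \<Union>{\<rho>\<in>S. \<rho> \<subseteq> identity_preimage C D Fm}"
proof (intro equalityI subsetI)
  fix b assume b: "b \<in> identity_preimage C D Fm"
  have part: "is_partition S (Mor C)" using quasi_schemoid_partition[OF qs_morphism_source[OF mor]] .
  obtain \<rho> where \<rho>: "\<rho> \<in> S" "b \<in> \<rho>"
    using partition_covers[OF part] b unfolding identity_preimage_def by blast
  obtain \<tau> where \<tau>: "\<tau> \<in> T" "Fm ` \<rho> \<subseteq> \<tau>" using qs_morphism_block[OF mor \<rho>(1)] by blast
  have "\<tau> \<inter> identities D \<noteq> {}" using b \<rho>(2) \<tau>(2) unfolding identity_preimage_def by blast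
  then have "\<tau> \<subseteq> identities D" by (rule unital_qs_block_identities[OF unital \<tau>(1)])
  then have "\<rho> \<subseteq> identity_preimage C D Fm"
    using \<tau>(2) partition_block_subset[OF part \<rho>(1)] unfolding identity_preimage_def by blast
  then show "b \<in> \<Union>{\<rho>\<in>S. \<rho> \<subseteq> identity_preimage C D Fm}" using \<rho> by blast
qed blast

lemma inj_on_fst_factor_pairs_identity_preimage:
  assumes G: "groupoid C" and \<sigma>: "\<sigma> \<subseteq> Mor C"
  shows "inj_on fst (factor_pairs C \<sigma> (identity_preimage C D Fm) f)"
proof (rule inj_onI, clarsimp)
  fix a b b'
  assume "(a, b) \<in> factor_pairs C \<sigma> (identity_preimage C D Fm) f" "(a, b') \<in> factor_pairs C \<sigma> (identity_preimage C D Fm) f"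
  then have "a \<in> Mor C" "b \<in> Mor C" "b' \<in> Mor C" "Src C a = Tgt C b" "Src C a = Tgt C b'"
    "Cmp C a b = Cmp C a b'"
    using \<sigma> unfolding factor_pairs_def identity_preimage_def by auto
  then show "b = b'" using groupoid_cancel_left[OF G] by blast
qed

lemma fst_factor_pairs_identity_preimage_image:
  assumes GC: "groupoid C" and GD: "groupoid D" and F: "is_functor C D Fo Fm"
    and \<sigma>: "\<sigma> \<subseteq> Mor C" and f: "f \<in> Mor C"
  shows "fst ` factor_pairs C \<sigma> (identity_preimage C D Fm) f = {a \<in> \<sigma>. Tgt C a = Tgt C f \<and> Fm a = Fm f}"
proof (intro equalityI subsetI)
  have catC: "category C" and catD: "category D" using GC GD by (simp_all add: groupoid_category)
  fix a assume "a \<in> fst ` factor_pairs C \<sigma> (identity_preimage C D Fm) f"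
  then obtain b where a: "a \<in> \<sigma>" and b: "b \<in> Mor C" and Fb: "Fm b \<in> identities D"
    and ab: "Src C a = Tgt C b" and f_eq: "Cmp C a b = f"
    unfolding factor_pairs_def identity_preimage_def by auto
  have aM: "a \<in> Mor C" using a \<sigma> by blast
  obtain y where y: "y \<in> Ob D" "Fm b = Idm D y" using Fb unfolding identities_def by blast
  have "Tgt D (Fm b) = Src D (Fm a)" using functor_Mor[OF F aM] functor_Mor[OF F b] ab by simp
  then have "y = Src D (Fm a)" using category_Idm[OF catD y(1)] y(2) by simp
  have FaM: "Fm a \<in> Mor D" using functor_Mor[OF F aM] by blast
  have "Fm f = Cmp D (Fm a) (Fm b)" using functor_Cmp[OF F aM b ab] f_eq by simp
  also have "\<dots> = Fm a"
    using y(2) \<open>y = Src D (Fm a)\<close> category_Idm_right[OF catD FaM] by simp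
  finally have "Fm f = Fm a" .
  moreover have "Tgt C f = Tgt C a" using category_Cmp[OF catC aM b ab] f_eq by simp
  ultimately show "a \<in> {a \<in> \<sigma>. Tgt C a = Tgt C f \<and> Fm a = Fm f}" using a by simp
next
  have catD: "category D" using GD by (rule groupoid_category)
  fix a assume "a \<in> {a \<in> \<sigma>. Tgt C a = Tgt C f \<and> Fm a = Fm f}"
  then have a: "a \<in> \<sigma>" and t: "Tgt C a = Tgt C f" and Fa: "Fm a = Fm f" by auto
  have aM: "a \<in> Mor C" using a \<sigma> by blast
  obtain b where b: "b \<in> Mor C" "Tgt C b = Src C a" "Cmp C a b = f"
    by (rule groupoid_factor_through[OF GC aM f t])
  have "Cmp D (Fm a) (Fm b) = Fm a" using functor_Cmp[OF F aM b(1)] b Fa by simp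
  moreover have "Fm a \<in> Mor D" "Fm b \<in> Mor D" "Src D (Fm a) = Tgt D (Fm b)"
    using functor_Mor[OF F aM] functor_Mor[OF F b(1)] b(2) by simp_all
  ultimately have "Fm b = Idm D (Src D (Fm a))"
    using groupoid_right_unit_unique[OF GD] by blast
  moreover have "Src D (Fm a) \<in> Ob D"
    using category_Src_Tgt_in_Ob[OF catD] functor_Mor[OF F aM] by blast
  ultimately have "b \<in> identity_preimage C D Fm" using b(1) unfolding identity_preimage_def identities_def by blast
  then have "(a, b) \<in> factor_pairs C \<sigma> (identity_preimage C D Fm) f"
    using a b unfolding factor_pairs_def by simp
  then show "a \<in> fst ` factor_pairs C \<sigma> (identity_preimage C D Fm) f" by force
qed

lemma card_fibre_eq_card_factor_pairs:
  assumes "groupoid C" "groupoid D" "is_functor C D Fo Fm" "\<sigma> \<subseteq> Mor C" "f \<in> Mor C"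
  shows "card {a \<in> \<sigma>. Tgt C a = Tgt C f \<and> Fm a = Fm f} = card (factor_pairs C \<sigma> (identity_preimage C D Fm) f)"
proof -
  have "card (fst ` factor_pairs C \<sigma> (identity_preimage C D Fm) f) = card (factor_pairs C \<sigma> (identity_preimage C D Fm) f)"
    by (rule card_image[OF inj_on_fst_factor_pairs_identity_preimage[OF assms(1,4)]])
  then show ?thesis unfolding fst_factor_pairs_identity_preimage_image[OF assms] .
qed

lemma card_fibre_const_on_block:
  assumes fin: "finite (Mor C)" and GC: "groupoid C" and D: "basic_qs D T"
    and mor: "qs_morphism C S D T Fo Fm" and \<sigma>: "\<sigma> \<in> S" and f: "f \<in> \<sigma>" and f0: "f0 \<in> \<sigma>"
  shows "card {a \<in> \<sigma>. Tgt C a = Tgt C f \<and> Fm a = Fm f} = card {a \<in> \<sigma>. Tgt C a = Tgt C f0 \<and> Fm a = Fm f0}"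
proof -
  have qs: "quasi_schemoid C S" using mor by (rule qs_morphism_source)
  have GD: "groupoid D" and unital: "unital_qs D T" using D by (simp_all add: basic_qs_def)
  have F: "is_functor C D Fo Fm" using mor by (rule qs_morphism_functor)
  have \<sigma>M: "\<sigma> \<subseteq> Mor C" using partition_block_subset[OF quasi_schemoid_partition[OF qs] \<sigma>] .
  define B where "B = {\<rho>\<in>S. \<rho> \<subseteq> identity_preimage C D Fm}"
  have B: "B \<subseteq> S" and preimage: "identity_preimage C D Fm = \<Union>B"
    using identity_preimage_eq_Union_blocks[OF mor unital] unfolding B_def by blast+
  have "card {a \<in> \<sigma>. Tgt C a = Tgt C f \<and> Fm a = Fm f} = card (factor_pairs C \<sigma> (\<Union>B) f)"
    using card_fibre_eq_card_factor_pairs[OF GC GD F \<sigma>M] f \<sigma>M preimage by auto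
  also have "\<dots> = card (factor_pairs C \<sigma> (\<Union>B) f0)"
    by (rule card_factor_pairs_Union_const[OF qs fin \<sigma> \<sigma> B f f0])
  also have "\<dots> = card {a \<in> \<sigma>. Tgt C a = Tgt C f0 \<and> Fm a = Fm f0}"
    using card_fibre_eq_card_factor_pairs[OF GC GD F \<sigma>M] f0 \<sigma>M preimage by auto
  finally show ?thesis .
qed

theorem lemma6p5:
  fixes C :: "('o,'m) cat" and S :: "'m set set"
    and D :: "('p,'n) cat" and T :: "'n set set"
    and Fo :: "'o \<Rightarrow> 'p" and Fm :: "'m \<Rightarrow> 'n"
  assumes "quasi_schemoid C S" and "finite (Mor C)" and "groupoid C"
    and "basic_qs D T"
    and "admissible C S D T Fo Fm"
  shows "\<forall>\<sigma>\<in>S. \<exists>n::nat. n > 0 \<and>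
           (\<forall>x\<in>Ob C. \<forall>g\<in>img_block T Fm \<sigma>. Tgt D g = Fo x \<longrightarrow>
              card {f\<in>\<sigma>. Tgt C f = x \<and> Fm f = g} = n)"
proof
  fix \<sigma> assume \<sigma>: "\<sigma> \<in> S"
  have mor: "qs_morphism C S D T Fo Fm" using assms(5) by (rule admissible_qs_morphism)
  have part: "is_partition S (Mor C)" using assms(1) by (rule quasi_schemoid_partition)
  obtain f0 where f0: "f0 \<in> \<sigma>" using partition_block_nonempty[OF part \<sigma>] by blast
  let ?n = "card {a \<in> \<sigma>. Tgt C a = Tgt C f0 \<and> Fm a = Fm f0}"
  have "finite {a \<in> \<sigma>. Tgt C a = Tgt C f0 \<and> Fm a = Fm f0}"
    using partition_block_subset[OF part \<sigma>] assms(2) by (simp add: finite_subset)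
  then have "?n > 0" using f0 card_gt_0_iff by blast
  moreover have "card {f\<in>\<sigma>. Tgt C f = x \<and> Fm f = g} = ?n"
    if x: "x \<in> Ob C" and g: "g \<in> img_block T Fm \<sigma>" "Tgt D g = Fo x" for x g
  proof -
    obtain f where f: "f \<in> \<sigma>" "Tgt C f = x" "Fm f = g"
      using admissibleD[OF assms(5) x \<sigma> g] by blast
    then show ?thesis using card_fibre_const_on_block[OF assms(2,3,4) mor \<sigma> f(1) f0] by simp
  qed
  ultimately show "\<exists>n::nat. n > 0 \<and> (\<forall>x\<in>Ob C. \<forall>g\<in>img_block T Fm \<sigma>. Tgt D g = Fo x \<longrightarrow>
      card {f\<in>\<sigma>. Tgt C f = x \<and> Fm f = g} = n)"
    by blast
qed

end
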